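(* Let $B$ be a finite set of Boolean functions. Then there exists an MSO formula $\theta_{\mathit{imp}}$ over the vocabulary $\tau_{B,\mathit{imp}}$ such that for every set $\Gamma$ of propositional $B$-formulae and all $F,G\subseteq\Gamma$ it holds that $F\models G$ if and only if $\mathcal{A}_{F,G}\models\theta_{\mathit{imp}}$.
   Context: For a finite set $B$ of Boolean functions, a $B$-formula is a propositional formula built from propositional variables by applying functions $f\in B$ (0-ary functions act as constants). $F\models G$ means every assignment satisfying all formulae of $F$ satisfies all formulae of $G$. Let $\tau_B$ consist of a unary symbol $\mathrm{const}_f$ for each 0-ary $f\in B$ and a binary symbol $\mathrm{conn}_{f,i}$ for each $f\in B$, $1\le i\le\mathrm{arity}(f)$; let $\tau_{B,\mathit{imp}}=\tau_B\cup\{\mathrm{var},\mathrm{repr},\mathrm{reprPrem},\mathrm{reprConc}\}$, all new symbols unary. For sets $F,G$ of $B$-formulae, $\mathcal{A}_{F,G}$ is the $\tau_{B,\mathit{imp}}$-structure whose universe is the set of subformulae of formulae in $F\cup G$, where $\mathrm{var}(x)$ holds iff $x$ is a variable, $\mathrm{repr}(x)$ iff $x\in F\cup G$, $\mathrm{const}_f(x)$ iff $x$ is the constant $f$, $\mathrm{conn}_{f,i}(x,y)$ iff $x$ is the $i$-th argument of the function $f$ at the root of $y$, $\mathrm{reprPrem}(x)$ iff $x\in F$, and $\mathrm{reprConc}(x)$ iff $x\in G$. *)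

theory Defs
  imports Main
begin

text \<open>A Boolean function is represented as a pair (n, g) of its arity n and
  the map g on argument lists (only its values on lists of length n matter).\<close>
type_synonym boolfun = "nat \<times> (bool list \<Rightarrow> bool)"

definition arity :: "boolfun \<Rightarrow> nat" where
  "arity f = fst f"

definition apply_bf :: "boolfun \<Rightarrow> bool list \<Rightarrow> bool" where
  "apply_bf f xs = snd f xs"

text \<open>Propositional formulae over variables (natural numbers) built by applying
  Boolean functions; a 0-ary function applied to no arguments is a constant.\<close>
datatype pform = PVar nat | App boolfun "pform list"

fun is_B_formula :: "boolfun set \<Rightarrow> pform \<Rightarrow> bool" where
  "is_B_formula B (PVar v) = True"
| "is_B_formula B (App f args) =
     (f \<in> B \<and> length args = arity f \<and> (\<forall>a\<in>set args. is_B_formula B a))"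

fun eval :: "(nat \<Rightarrow> bool) \<Rightarrow> pform \<Rightarrow> bool" where
  "eval \<sigma> (PVar v) = \<sigma> v"
| "eval \<sigma> (App f args) = apply_bf f (map (eval \<sigma>) args)"

definition entails :: "pform set \<Rightarrow> pform set \<Rightarrow> bool" where
  "entails F G \<longleftrightarrow> (\<forall>\<sigma>. (\<forall>\<phi>\<in>F. eval \<sigma> \<phi>) \<longrightarrow> (\<forall>\<psi>\<in>G. eval \<sigma> \<psi>))"

fun subforms :: "pform \<Rightarrow> pform set" where
  "subforms (PVar v) = {PVar v}"
| "subforms (App f args) = insert (App f args) (\<Union>a\<in>set args. subforms a)"

text \<open>First-order variables and set (second-order) variables are both named by
  natural numbers, in separate name spaces.\<close>
datatype 'r mso =
    Rel 'r "nat list"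
  | Eq nat nat
  | Mem nat nat
  | Neg "'r mso"
  | Conj "'r mso" "'r mso"
  | Ex1 nat "'r mso"
  | Ex2 nat "'r mso"

fun sat :: "'a set \<Rightarrow> ('r \<Rightarrow> 'a list \<Rightarrow> bool) \<Rightarrow> (nat \<Rightarrow> 'a) \<Rightarrow> (nat \<Rightarrow> 'a set)
             \<Rightarrow> 'r mso \<Rightarrow> bool" where
  "sat U I \<alpha> \<beta> (Rel r xs) = I r (map \<alpha> xs)"
| "sat U I \<alpha> \<beta> (Eq i j) = (\<alpha> i = \<alpha> j)"
| "sat U I \<alpha> \<beta> (Mem i X) = (\<alpha> i \<in> \<beta> X)"
| "sat U I \<alpha> \<beta> (Neg \<phi>) = (\<not> sat U I \<alpha> \<beta> \<phi>)"
| "sat U I \<alpha> \<beta> (Conj \<phi> \<psi>) = (sat U I \<alpha> \<beta> \<phi> \<and> sat U I \<alpha> \<beta> \<psi>)"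
| "sat U I \<alpha> \<beta> (Ex1 i \<phi>) = (\<exists>a\<in>U. sat U I (\<alpha>(i := a)) \<beta> \<phi>)"
| "sat U I \<alpha> \<beta> (Ex2 X \<phi>) = (\<exists>A. A \<subseteq> U \<and> sat U I \<alpha> (\<beta>(X := A)) \<phi>)"

fun fo_free :: "'r mso \<Rightarrow> nat set" where
  "fo_free (Rel r xs) = set xs"
| "fo_free (Eq i j) = {i, j}"
| "fo_free (Mem i X) = {i}"
| "fo_free (Neg \<phi>) = fo_free \<phi>"
| "fo_free (Conj \<phi> \<psi>) = fo_free \<phi> \<union> fo_free \<psi>"
| "fo_free (Ex1 i \<phi>) = fo_free \<phi> - {i}"
| "fo_free (Ex2 X \<phi>) = fo_free \<phi>"

fun so_free :: "'r mso \<Rightarrow> nat set" where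
  "so_free (Rel r xs) = {}"
| "so_free (Eq i j) = {}"
| "so_free (Mem i X) = {X}"
| "so_free (Neg \<phi>) = so_free \<phi>"
| "so_free (Conj \<phi> \<psi>) = so_free \<phi> \<union> so_free \<psi>"
| "so_free (Ex1 i \<phi>) = so_free \<phi>"
| "so_free (Ex2 X \<phi>) = so_free \<phi> - {X}"

definition sentence :: "'r mso \<Rightarrow> bool" where
  "sentence \<phi> \<longleftrightarrow> fo_free \<phi> = {} \<and> so_free \<phi> = {}"

fun over_vocab :: "'r set \<Rightarrow> ('r \<Rightarrow> nat) \<Rightarrow> 'r mso \<Rightarrow> bool" where
  "over_vocab tau ar (Rel r xs) = (r \<in> tau \<and> length xs = ar r)"
| "over_vocab tau ar (Eq i j) = True"
| "over_vocab tau ar (Mem i X) = True"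
| "over_vocab tau ar (Neg \<phi>) = over_vocab tau ar \<phi>"
| "over_vocab tau ar (Conj \<phi> \<psi>) = (over_vocab tau ar \<phi> \<and> over_vocab tau ar \<psi>)"
| "over_vocab tau ar (Ex1 i \<phi>) = over_vocab tau ar \<phi>"
| "over_vocab tau ar (Ex2 X \<phi>) = over_vocab tau ar \<phi>"

definition models :: "'a set \<Rightarrow> ('r \<Rightarrow> 'a list \<Rightarrow> bool) \<Rightarrow> 'r mso \<Rightarrow> bool" where
  "models U I \<phi> \<longleftrightarrow> (\<forall>\<alpha> \<beta>. sat U I \<alpha> \<beta> \<phi>)"

datatype sym =
    SConst boolfun
  | SConn boolfun nat
  | SVar | SRepr | SReprPrem | SReprConc

fun sym_arity :: "sym \<Rightarrow> nat" where
  "sym_arity (SConn f i) = 2"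
| "sym_arity _ = 1"

definition tau_B :: "boolfun set \<Rightarrow> sym set" where
  "tau_B B = {SConst f | f. f \<in> B \<and> arity f = 0}
           \<union> {SConn f i | f i. f \<in> B \<and> 1 \<le> i \<and> i \<le> arity f}"

definition tau_B_imp :: "boolfun set \<Rightarrow> sym set" where
  "tau_B_imp B = tau_B B \<union> {SVar, SRepr, SReprPrem, SReprConc}"

definition univ_FG :: "pform set \<Rightarrow> pform set \<Rightarrow> pform set" where
  "univ_FG F G = (\<Union>\<phi>\<in>F \<union> G. subforms \<phi>)"

fun interp_FG :: "pform set \<Rightarrow> pform set \<Rightarrow> sym \<Rightarrow> pform list \<Rightarrow> bool" where
  "interp_FG F G SVar [x] = (\<exists>v. x = PVar v)"
| "interp_FG F G SRepr [x] = (x \<in> F \<union> G)"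
| "interp_FG F G (SConst f) [x] = (x = App f [])"
| "interp_FG F G (SConn f i) [x, y] =
     (\<exists>args. y = App f args \<and> 1 \<le> i \<and> i \<le> length args \<and> args ! (i - 1) = x)"
| "interp_FG F G SReprPrem [x] = (x \<in> F)"
| "interp_FG F G SReprConc [x] = (x \<in> G)"
| "interp_FG F G _ _ = False"

end

theory Submission
  imports Defs
begin

text \<open>A set A of subformulae respecting all connectives is exactly the set of subformulae true
  under the assignment v \<mapsto> (v \<in> A); so F \<not>\<Turnstile> G iff some such A contains F but misses a member
  of G. Quantifying over A is a monadic second-order quantifier, and "A respects the connective
  at x" is first-order expressible: the head f of x is visible through const_f or conn_{f,1},
  the membership bits of its arguments through conn_{f,i}, and the Boolean function f applied
  to these finitely many bits is a Shannon expansion.\<close>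

abbreviation All1 :: "nat \<Rightarrow> 'r mso \<Rightarrow> 'r mso" where
  "All1 i \<phi> \<equiv> Neg (Ex1 i (Neg \<phi>))"

abbreviation Disj :: "'r mso \<Rightarrow> 'r mso \<Rightarrow> 'r mso" where
  "Disj \<phi> \<psi> \<equiv> Neg (Conj (Neg \<phi>) (Neg \<psi>))"

abbreviation Imp :: "'r mso \<Rightarrow> 'r mso \<Rightarrow> 'r mso" where
  "Imp \<phi> \<psi> \<equiv> Neg (Conj \<phi> (Neg \<psi>))"

abbreviation Iff :: "'r mso \<Rightarrow> 'r mso \<Rightarrow> 'r mso" where
  "Iff \<phi> \<psi> \<equiv> Conj (Imp \<phi> \<psi>) (Imp \<psi> \<phi>)"

abbreviation Verum :: "'r mso" where
  "Verum \<equiv> All1 0 (Eq 0 0)"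

abbreviation Falsum :: "'r mso" where
  "Falsum \<equiv> Neg Verum"

fun Conjs :: "'r mso list \<Rightarrow> 'r mso" where
  "Conjs [] = Verum"
| "Conjs (\<phi> # \<phi>s) = Conj \<phi> (Conjs \<phi>s)"

lemma sat_Conjs: "sat U I \<alpha> \<beta> (Conjs \<phi>s) \<longleftrightarrow> (\<forall>\<phi>\<in>set \<phi>s. sat U I \<alpha> \<beta> \<phi>)"
  by (induction \<phi>s) auto

lemma fo_free_Conjs: "fo_free (Conjs \<phi>s) = (\<Union>\<phi>\<in>set \<phi>s. fo_free \<phi>)"
  by (induction \<phi>s) auto

lemma so_free_Conjs: "so_free (Conjs \<phi>s) = (\<Union>\<phi>\<in>set \<phi>s. so_free \<phi>)"
  by (induction \<phi>s) auto

lemma over_vocab_Conjs: "over_vocab T ar (Conjs \<phi>s) \<longleftrightarrow> (\<forall>\<phi>\<in>set \<phi>s. over_vocab T ar \<phi>)"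
  by (induction \<phi>s) auto

fun shannon :: "(nat \<Rightarrow> 'r mso) \<Rightarrow> (bool list \<Rightarrow> bool) \<Rightarrow> nat list \<Rightarrow> 'r mso" where
  "shannon p g [] = (if g [] then Verum else Falsum)"
| "shannon p g (i # is) =
     Disj (Conj (p i) (shannon p (\<lambda>bs. g (True # bs)) is))
          (Conj (Neg (p i)) (shannon p (\<lambda>bs. g (False # bs)) is))"

lemma sat_shannon: "sat U I \<alpha> \<beta> (shannon p g is) \<longleftrightarrow> g (map (\<lambda>i. sat U I \<alpha> \<beta> (p i)) is)"
proof (induction "is" arbitrary: g)
  case (Cons i "is")
  then show ?case
    by (cases "sat U I \<alpha> \<beta> (p i)") simp_all
qed simp

lemma fo_free_shannon: "fo_free (shannon p g is) \<subseteq> (\<Union>i\<in>set is. fo_free (p i))"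
  by (induction "is" arbitrary: g) (simp_all, blast)

lemma so_free_shannon: "so_free (shannon p g is) \<subseteq> (\<Union>i\<in>set is. so_free (p i))"
  by (induction "is" arbitrary: g) (simp_all, blast)

lemma over_vocab_shannon:
  "\<forall>i\<in>set is. over_vocab T ar (p i) \<Longrightarrow> over_vocab T ar (shannon p g is)"
  by (induction "is" arbitrary: g) simp_all

definition args_closed :: "pform set \<Rightarrow> bool" where
  "args_closed U \<longleftrightarrow> (\<forall>f args. App f args \<in> U \<longrightarrow> set args \<subseteq> U)"

lemma args_closedD: "args_closed U \<Longrightarrow> App f args \<in> U \<Longrightarrow> a \<in> set args \<Longrightarrow> a \<in> U"
  unfolding args_closed_def by blast

definition respects_connectives :: "pform set \<Rightarrow> pform set \<Rightarrow> bool" where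
  "respects_connectives U A \<longleftrightarrow>
     (\<forall>f args. App f args \<in> U \<longrightarrow> (App f args \<in> A \<longleftrightarrow> apply_bf f (map (\<lambda>a. a \<in> A) args)))"

lemma respects_connectivesD:
  "respects_connectives U A \<Longrightarrow> App f args \<in> U \<Longrightarrow>
    App f args \<in> A \<longleftrightarrow> apply_bf f (map (\<lambda>a. a \<in> A) args)"
  unfolding respects_connectives_def by blast

lemma respects_connectives_mem_iff_eval:
  assumes "args_closed U" "respects_connectives U A" "x \<in> U"
  shows "x \<in> A \<longleftrightarrow> eval (\<lambda>v. PVar v \<in> A) x"
  using assms(3)
proof (induction x)
  case (PVar v)
  then show ?case by simp
next
  case (App f args)
  then show ?case
    using args_closedD[OF assms(1)] respects_connectivesD[OF assms(2)]
    by (simp cong: map_cong)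
qed

lemma respects_connectives_true_subformulae:
  assumes "args_closed U"
  shows "respects_connectives U {y \<in> U. eval \<sigma> y}"
  unfolding respects_connectives_def
proof (intro allI impI)
  fix f args assume "App f args \<in> U"
  with args_closedD[OF assms] show "App f args \<in> {y \<in> U. eval \<sigma> y} \<longleftrightarrow>
      apply_bf f (map (\<lambda>a. a \<in> {y \<in> U. eval \<sigma> y}) args)"
    by (simp cong: map_cong)
qed

lemma entails_iff_no_separating_set:
  assumes "args_closed U" "F \<subseteq> U" "G \<subseteq> U"
  shows "\<not> entails F G \<longleftrightarrow> (\<exists>A\<subseteq>U. respects_connectives U A \<and> F \<subseteq> A \<and> \<not> G \<subseteq> A)"
proof
  assume "\<not> entails F G"
  then obtain \<sigma> x where "\<forall>\<phi>\<in>F. eval \<sigma> \<phi>" "x \<in> G" "\<not> eval \<sigma> x"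
    unfolding entails_def by blast
  with assms show "\<exists>A\<subseteq>U. respects_connectives U A \<and> F \<subseteq> A \<and> \<not> G \<subseteq> A"
    by (intro exI[of _ "{y \<in> U. eval \<sigma> y}"])
       (auto simp: respects_connectives_true_subformulae)
next
  assume "\<exists>A\<subseteq>U. respects_connectives U A \<and> F \<subseteq> A \<and> \<not> G \<subseteq> A"
  then obtain A x where A: "respects_connectives U A" "F \<subseteq> A" and x: "x \<in> G" "x \<notin> A"
    by blast
  have "y \<in> A \<longleftrightarrow> eval (\<lambda>v. PVar v \<in> A) y" if "y \<in> U" for y
    using respects_connectives_mem_iff_eval[OF assms(1) A(1) that] .
  with A(2) x assms(2,3) show "\<not> entails F G"
    unfolding entails_def by blast
qed

lemma subforms_refl: "\<phi> \<in> subforms \<phi>"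
  by (cases \<phi>) auto

lemma subforms_trans: "\<psi> \<in> subforms \<phi> \<Longrightarrow> subforms \<psi> \<subseteq> subforms \<phi>"
  by (induction \<phi>) auto

lemma is_B_formula_subforms: "\<psi> \<in> subforms \<phi> \<Longrightarrow> is_B_formula B \<phi> \<Longrightarrow> is_B_formula B \<psi>"
  by (induction \<phi>) auto

lemma args_closed_univ_FG: "args_closed (univ_FG F G)"
  unfolding args_closed_def univ_FG_def
  using subforms_trans subforms_refl by fastforce

lemma subset_univ_FG: "F \<subseteq> univ_FG F G" "G \<subseteq> univ_FG F G"
  unfolding univ_FG_def by (auto intro: subforms_refl)

lemma is_B_formula_univ_FG:
  "\<forall>\<phi>\<in>F \<union> G. is_B_formula B \<phi> \<Longrightarrow> \<psi> \<in> univ_FG F G \<Longrightarrow> is_B_formula B \<psi>"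
  unfolding univ_FG_def using is_B_formula_subforms by blast

lemma SConn_mem_tau_B_imp: "SConn f i \<in> tau_B_imp B \<longleftrightarrow> f \<in> B \<and> 1 \<le> i \<and> i \<le> arity f"
  unfolding tau_B_imp_def tau_B_def by blast

lemma SConst_mem_tau_B_imp: "SConst f \<in> tau_B_imp B \<longleftrightarrow> f \<in> B \<and> arity f = 0"
  unfolding tau_B_imp_def tau_B_def by blast

text \<open>First-order variable 0 ranges over subformulae and 1 is auxiliary; set variable 0 is the
  candidate set A. Arguments are indexed from 0, while conn_{f,i} counts from 1.\<close>

definition arg_in :: "boolfun \<Rightarrow> nat \<Rightarrow> sym mso" where
  "arg_in f i = Ex1 1 (Conj (Rel (SConn f (Suc i)) [1, 0]) (Mem 1 0))"

definition head_is :: "boolfun \<Rightarrow> sym mso" where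
  "head_is f = (if arity f = 0 then Rel (SConst f) [0] else Ex1 1 (Rel (SConn f 1) [1, 0]))"

definition respects_conn :: "boolfun \<Rightarrow> sym mso" where
  "respects_conn f =
     Imp (head_is f) (Iff (Mem 0 0) (shannon (arg_in f) (apply_bf f) [0..<arity f]))"

definition theta_imp :: "boolfun list \<Rightarrow> sym mso" where
  "theta_imp bs = Neg (Ex2 0 (Conj (All1 0 (Conjs (map respects_conn bs)))
      (Conj (All1 0 (Imp (Rel SReprPrem [0]) (Mem 0 0)))
            (Ex1 0 (Conj (Rel SReprConc [0]) (Neg (Mem 0 0)))))))"

lemma sentence_theta_imp: "sentence (theta_imp bs)"
proof -
  have "fo_free (respects_conn f) \<subseteq> {0} \<and> so_free (respects_conn f) \<subseteq> {0}" for f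
    using fo_free_shannon[of "arg_in f" "apply_bf f" "[0..<arity f]"]
      so_free_shannon[of "arg_in f" "apply_bf f" "[0..<arity f]"]
    by (auto simp: respects_conn_def head_is_def arg_in_def)
  then show ?thesis
    by (fastforce simp: sentence_def theta_imp_def fo_free_Conjs so_free_Conjs)
qed

lemma over_vocab_theta_imp:
  assumes "set bs = B"
  shows "over_vocab (tau_B_imp B) sym_arity (theta_imp bs)"
proof -
  have "over_vocab (tau_B_imp B) sym_arity (respects_conn f)" if "f \<in> B" for f
    using that over_vocab_shannon[of "[0..<arity f]" "tau_B_imp B" sym_arity "arg_in f"]
    by (auto simp: respects_conn_def head_is_def arg_in_def SConn_mem_tau_B_imp SConst_mem_tau_B_imp)
  with assms show ?thesis
    by (auto simp: theta_imp_def over_vocab_Conjs tau_B_imp_def)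
qed

lemma sat_arg_in:
  assumes "args_closed U" "App f args \<in> U" "\<alpha> 0 = App f args" "i < length args"
  shows "sat U (interp_FG F G) \<alpha> \<beta> (arg_in f i) \<longleftrightarrow> args ! i \<in> \<beta> 0"
proof -
  have "args ! i \<in> U"
    using args_closedD[OF assms(1,2)] assms(4) by simp
  with assms(3,4) show ?thesis
    by (auto simp: arg_in_def)
qed

lemma sat_head_is:
  assumes "args_closed U" "y \<in> U" "\<alpha> 0 = y" "is_B_formula B y"
  shows "sat U (interp_FG F G) \<alpha> \<beta> (head_is f) \<longleftrightarrow> (\<exists>args. y = App f args)"
proof (cases "arity f = 0")
  case True
  with assms(3,4) show ?thesis
    by (cases y) (auto simp: head_is_def)
next
  case False
  show ?thesis
  proof
    assume "\<exists>args. y = App f args"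
    then obtain args where y: "y = App f args" by blast
    with assms(4) False have "args \<noteq> []" by auto
    then have "args ! 0 \<in> set args" by simp
    with assms(1,2) y have "args ! 0 \<in> U"
      by (blast intro: args_closedD)
    with False assms(3) y \<open>args \<noteq> []\<close> show "sat U (interp_FG F G) \<alpha> \<beta> (head_is f)"
      by (auto simp: head_is_def Suc_le_eq)
  qed (use False assms(3) in \<open>auto simp: head_is_def\<close>)
qed

lemma sat_respects_conn:
  assumes "args_closed U" "y \<in> U" "\<alpha> 0 = y" "is_B_formula B y"
  shows "sat U (interp_FG F G) \<alpha> \<beta> (respects_conn f) \<longleftrightarrow>
    (\<forall>args. y = App f args \<longrightarrow> (y \<in> \<beta> 0 \<longleftrightarrow> apply_bf f (map (\<lambda>a. a \<in> \<beta> 0) args)))"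
proof -
  have "sat U (interp_FG F G) \<alpha> \<beta> (shannon (arg_in f) (apply_bf f) [0..<arity f]) \<longleftrightarrow>
        apply_bf f (map (\<lambda>a. a \<in> \<beta> 0) args)" if y: "y = App f args" for args
  proof -
    from y assms(4) have len: "length args = arity f" by simp
    with y assms have "map (\<lambda>i. sat U (interp_FG F G) \<alpha> \<beta> (arg_in f i)) [0..<arity f] =
        map (\<lambda>i. args ! i \<in> \<beta> 0) [0..<length args]"
      using sat_arg_in[of U f args \<alpha> _ F G \<beta>] by (intro map_cong) auto
    also have "\<dots> = map (\<lambda>a. a \<in> \<beta> 0) args"
      by (rule nth_equalityI) auto
    finally show ?thesis
      by (simp add: sat_shannon)
  qed
  with sat_head_is[of U y \<alpha> B F G \<beta> f, OF assms] assms(3) show ?thesis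
    by (auto simp: respects_conn_def)
qed

lemma respects_connectives_iff_sat:
  assumes "args_closed U" "\<forall>y\<in>U. is_B_formula B y" "set bs = B" "A \<subseteq> U"
  shows "respects_connectives U A \<longleftrightarrow>
    (\<forall>y\<in>U. sat U (interp_FG F G) (\<alpha>(0 := y)) (\<beta>(0 := A)) (Conjs (map respects_conn bs)))"
proof -
  have "sat U (interp_FG F G) (\<alpha>(0 := y)) (\<beta>(0 := A)) (Conjs (map respects_conn bs)) \<longleftrightarrow>
      (\<forall>f args. y = App f args \<longrightarrow> (y \<in> A \<longleftrightarrow> apply_bf f (map (\<lambda>a. a \<in> A) args)))"
    if "y \<in> U" for y
  proof -
    have "is_B_formula B y" using assms(2) that by blast
    with assms(1,3) that show ?thesis
      using sat_respects_conn[of U y "\<alpha>(0 := y)" B F G "\<beta>(0 := A)"]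
      by (cases y) (auto simp: sat_Conjs)
  qed
  then show ?thesis
    unfolding respects_connectives_def by blast
qed

lemma sat_theta_imp_iff:
  assumes "args_closed U" "\<forall>y\<in>U. is_B_formula B y" "set bs = B" "F \<subseteq> U" "G \<subseteq> U"
  shows "sat U (interp_FG F G) \<alpha> \<beta> (theta_imp bs) \<longleftrightarrow>
    \<not> (\<exists>A\<subseteq>U. respects_connectives U A \<and> F \<subseteq> A \<and> \<not> G \<subseteq> A)"
proof -
  have "sat U (interp_FG F G) \<alpha> \<beta> (theta_imp bs) \<longleftrightarrow>
      \<not> (\<exists>A\<subseteq>U. (\<forall>y\<in>U. sat U (interp_FG F G) (\<alpha>(0 := y)) (\<beta>(0 := A))
                    (Conjs (map respects_conn bs)))
        \<and> (\<forall>x\<in>U. x \<in> F \<longrightarrow> x \<in> A) \<and> (\<exists>x\<in>U. x \<in> G \<and> x \<notin> A))"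
    by (simp add: theta_imp_def)
  also have "\<dots> \<longleftrightarrow> \<not> (\<exists>A\<subseteq>U. respects_connectives U A \<and> F \<subseteq> A \<and> \<not> G \<subseteq> A)"
    using respects_connectives_iff_sat[OF assms(1-3), of _ F G \<alpha> \<beta>] assms(4,5)
    by (intro arg_cong[where f = Not] ex_cong1) blast
  finally show ?thesis .
qed

theorem lemma2:
  fixes B :: "boolfun set"
  assumes "finite B"
  shows "\<exists>\<theta> :: sym mso. sentence \<theta> \<and> over_vocab (tau_B_imp B) sym_arity \<theta> \<and>
           (\<forall>\<Gamma> F G. (\<forall>\<phi>\<in>\<Gamma>. is_B_formula B \<phi>) \<longrightarrow> F \<subseteq> \<Gamma> \<longrightarrow> G \<subseteq> \<Gamma> \<longrightarrow>
              (entails F G \<longleftrightarrow> models (univ_FG F G) (interp_FG F G) \<theta>))"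
proof -
  obtain bs where bs: "set bs = B"
    using finite_list[OF assms] by blast
  show ?thesis
  proof (intro exI[of _ "theta_imp bs"] conjI allI impI)
    show "sentence (theta_imp bs)"
      by (rule sentence_theta_imp)
    show "over_vocab (tau_B_imp B) sym_arity (theta_imp bs)"
      using bs by (rule over_vocab_theta_imp)
    fix \<Gamma> F G
    assume "\<forall>\<phi>\<in>\<Gamma>. is_B_formula B \<phi>" "F \<subseteq> \<Gamma>" "G \<subseteq> \<Gamma>"
    then have "\<forall>y\<in>univ_FG F G. is_B_formula B y"
      by (meson Un_iff is_B_formula_univ_FG subsetD)
    then have "models (univ_FG F G) (interp_FG F G) (theta_imp bs) \<longleftrightarrow>
        \<not> (\<exists>A\<subseteq>univ_FG F G. respects_connectives (univ_FG F G) A \<and> F \<subseteq> A \<and> \<not> G \<subseteq> A)"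
      unfolding models_def
      by (simp only: sat_theta_imp_iff[OF args_closed_univ_FG _ bs subset_univ_FG] simp_thms)
    moreover have "\<not> entails F G \<longleftrightarrow>
        (\<exists>A\<subseteq>univ_FG F G. respects_connectives (univ_FG F G) A \<and> F \<subseteq> A \<and> \<not> G \<subseteq> A)"
      by (rule entails_iff_no_separating_set[OF args_closed_univ_FG subset_univ_FG])
    ultimately show "entails F G \<longleftrightarrow> models (univ_FG F G) (interp_FG F G) (theta_imp bs)"
      by blast
  qed
qed

end
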